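(* Let $f(x_0,x_1,x_2,x_3)=(x_0^2+x_1^2-x_2^2-x_3^2)x_3$ on $\mathbb{R}^4$. Then the index cone of $f$ is nonempty, and the 3-manifold $M=\{f=1\}$ inside the index cone, with the Riemannian metric given by restricting $-\frac{1}{6}\,\partial^2 f/\partial x_i\partial x_j$, has positive sectional curvature on some 2-plane at every point.
   Context: For a real form $f$ of degree $d$ on $\mathbb{R}^n$, the index cone is the set of points $x$ where $f(x)>0$ and the Hessian matrix $(\partial^2 f/\partial x_i\partial x_j)(x)$ has signature $(1,n-1)$. On the hypersurface $\{f=1\}$ in the index cone, the restriction of $-\frac{1}{d(d-1)}\partial^2 f/\partial x_i\partial x_j$ is a Riemannian metric (here $d=3$). *)

theory Defs
  imports "HOL-Analysis.Analysis"
begin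

definition partial :: "(real^'n \<Rightarrow> real) \<Rightarrow> 'n \<Rightarrow> real^'n \<Rightarrow> real" where
  "partial F i x = deriv (\<lambda>t. F (x + t *\<^sub>R axis i 1)) 0"

fun ipartial :: "'n list \<Rightarrow> (real^'n \<Rightarrow> real) \<Rightarrow> real^'n \<Rightarrow> real" where
  "ipartial [] F = F"
| "ipartial (i # is) F = partial (ipartial is F) i"

definition smooth_on :: "(real^'n) set \<Rightarrow> (real^'n \<Rightarrow> real) \<Rightarrow> bool" where
  "smooth_on U F \<longleftrightarrow> open U \<and>
     (\<forall>is. continuous_on U (ipartial is F) \<and>
        (\<forall>i. \<forall>x\<in>U. (\<lambda>t. ipartial is F (x + t *\<^sub>R axis i 1)) differentiable (at 0)))"

definition hessian :: "(real^'n \<Rightarrow> real) \<Rightarrow> real^'n \<Rightarrow> real^'n^'n" where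
  "hessian f x = (\<chi> i j. partial (partial f j) i x)"

definition quad_form :: "real^'n^'n \<Rightarrow> real^'n \<Rightarrow> real" where
  "quad_form A v = v \<bullet> (A *v v)"

definition pos_index :: "real^'n^'n \<Rightarrow> nat \<Rightarrow> bool" where
  "pos_index A p \<longleftrightarrow>
     (\<exists>V. subspace V \<and> dim V = p \<and> (\<forall>v\<in>V. v \<noteq> 0 \<longrightarrow> quad_form A v > 0)) \<and>
     (\<forall>V. subspace V \<and> (\<forall>v\<in>V. v \<noteq> 0 \<longrightarrow> quad_form A v > 0) \<longrightarrow> dim V \<le> p)"

definition has_signature :: "real^'n^'n \<Rightarrow> nat \<Rightarrow> nat \<Rightarrow> bool" where
  "has_signature A p q \<longleftrightarrow> pos_index A p \<and> pos_index (- A) q"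

definition index_cone :: "(real^'n \<Rightarrow> real) \<Rightarrow> (real^'n) set" where
  "index_cone f = {x. f x > 0 \<and> has_signature (hessian f x) 1 (CARD('n) - 1)}"

definition jac :: "(real^'m \<Rightarrow> real^'n) \<Rightarrow> 'n \<Rightarrow> 'm \<Rightarrow> real^'m \<Rightarrow> real" where
  "jac \<phi> k i u = partial (\<lambda>u. \<phi> u $ k) i u"

definition local_param :: "(real^'n) set \<Rightarrow> (real^'m) set \<Rightarrow> (real^'m \<Rightarrow> real^'n) \<Rightarrow> bool" where
  "local_param M U \<phi> \<longleftrightarrow> open U \<and> (\<forall>k. smooth_on U (\<lambda>u. \<phi> u $ k)) \<and>
     \<phi> ` U \<subseteq> M \<and> inj_on \<phi> U \<and> (\<exists>W. open W \<and> \<phi> ` U = W \<inter> M) \<and>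
     (\<forall>u\<in>U. \<forall>v. (\<Sum>i\<in>UNIV. (v $ i) *\<^sub>R (\<chi> k. jac \<phi> k i u)) = 0 \<longrightarrow> v = 0)"

definition gmet :: "nat \<Rightarrow> (real^'n \<Rightarrow> real) \<Rightarrow> (real^'m \<Rightarrow> real^'n) \<Rightarrow> 'm \<Rightarrow> 'm \<Rightarrow> real^'m \<Rightarrow> real" where
  "gmet d f \<phi> i j u = - (1 / (real d * (real d - 1))) *
     (\<Sum>k\<in>UNIV. \<Sum>l\<in>UNIV. hessian f (\<phi> u) $ k $ l * jac \<phi> k i u * jac \<phi> l j u)"

definition ginv :: "nat \<Rightarrow> (real^'n \<Rightarrow> real) \<Rightarrow> (real^'m \<Rightarrow> real^'n) \<Rightarrow> real^'m \<Rightarrow> real^'m^'m" where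
  "ginv d f \<phi> u = matrix_inv (\<chi> i j. gmet d f \<phi> i j u)"

definition christoffel :: "nat \<Rightarrow> (real^'n \<Rightarrow> real) \<Rightarrow> (real^'m \<Rightarrow> real^'n) \<Rightarrow> 'm \<Rightarrow> 'm \<Rightarrow> 'm \<Rightarrow> real^'m \<Rightarrow> real" where
  "christoffel d f \<phi> k i j u = (1/2) * (\<Sum>l\<in>UNIV. ginv d f \<phi> u $ k $ l *
      (partial (gmet d f \<phi> j l) i u + partial (gmet d f \<phi> i l) j u - partial (gmet d f \<phi> i j) l u))"

text \<open>Riemann tensor R^m_ijk, with R(d_i,d_j)d_k = R^m_ijk d_m and
  R(X,Y)Z = nabla_X nabla_Y Z - nabla_Y nabla_X Z - nabla_[X,Y] Z.\<close>
definition riemann :: "nat \<Rightarrow> (real^'n \<Rightarrow> real) \<Rightarrow> (real^'m \<Rightarrow> real^'n) \<Rightarrow> 'm \<Rightarrow> 'm \<Rightarrow> 'm \<Rightarrow> 'm \<Rightarrow> real^'m \<Rightarrow> real" where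
  "riemann d f \<phi> m i j k u =
     partial (christoffel d f \<phi> m j k) i u - partial (christoffel d f \<phi> m i k) j u
     + (\<Sum>p\<in>UNIV. christoffel d f \<phi> m i p u * christoffel d f \<phi> p j k u
                 - christoffel d f \<phi> m j p u * christoffel d f \<phi> p i k u)"

definition ginner :: "nat \<Rightarrow> (real^'n \<Rightarrow> real) \<Rightarrow> (real^'m \<Rightarrow> real^'n) \<Rightarrow> real^'m \<Rightarrow> real^'m \<Rightarrow> real^'m \<Rightarrow> real" where
  "ginner d f \<phi> u a b = (\<Sum>i\<in>UNIV. \<Sum>j\<in>UNIV. gmet d f \<phi> i j u * a $ i * b $ j)"

definition sectional_curv :: "nat \<Rightarrow> (real^'n \<Rightarrow> real) \<Rightarrow> (real^'m \<Rightarrow> real^'n) \<Rightarrow> real^'m \<Rightarrow> real^'m \<Rightarrow> real^'m \<Rightarrow> real" where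
  "sectional_curv d f \<phi> u a b =
     (\<Sum>i\<in>UNIV. \<Sum>j\<in>UNIV. \<Sum>k\<in>UNIV. \<Sum>l\<in>UNIV. \<Sum>m\<in>UNIV.
        a $ i * b $ j * b $ k * a $ l * gmet d f \<phi> l m u * riemann d f \<phi> m i j k u)
     / (ginner d f \<phi> u a a * ginner d f \<phi> u b b - (ginner d f \<phi> u a b)^2)"

definition f5 :: "real^4 \<Rightarrow> real" where
  "f5 x = ((x $ 0)^2 + (x $ 1)^2 - (x $ 2)^2 - (x $ 3)^2) * x $ 3"

definition M5 :: "(real^4) set" where
  "M5 = {x \<in> index_cone f5. f5 x = 1}"

end

theory Submission
  imports Defs
begin

text \<open>
  At a point of the level set f = 1 with x3 = -c, completing the square in v3 gives
  -3 x3 Hess f(v) = 2 (m - 3 x3 v3)^2 - 2 (m^2 + 3 c^2 L), where L is the Lorentz form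
  v0^2 + v1^2 - v2^2 and m = x0 v0 + x1 v1 - x2 v2 its polarisation. Hence the Hessian has
  signature (1,3) exactly when c > 0 and x0^2 + x1^2 - x2^2 < -3 c^2. On f = 1 this amounts to
  4 c^3 < 1 and x0^2 + x1^2 - x2^2 = -(1/c - c^2), so each sheet of M is parametrised by c and
  the upper half plane model of these hyperboloids. In these coordinates the metric is the warped
  product A(c) dc^2 + B(c) (dX^2 + dY^2) / Y^2 with A = (1 - 4 c^3) / (4 c^2 (1 - c^3)) and
  B = (1 - c^3) / 3, and the curvature of the plane spanned by the c- and X-directions is a sum of
  three positive terms, one of them positive because A is decreasing.
\<close>

lemma sum_UNIV_3: "(\<Sum>i\<in>(UNIV::3 set). f i) = f 0 + f 1 + f 2"
proof -
  have three: "(3::3) = 0" by simp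
  show ?thesis unfolding sum_3 three by (simp add: add_ac)
qed

lemma sum_UNIV_4: "(\<Sum>i\<in>(UNIV::4 set). f i) = f 0 + f 1 + f 2 + f 3"
proof -
  have four: "(4::4) = 0" by simp
  show ?thesis unfolding sum_4 four by (simp add: add_ac)
qed

lemma num3_cases: fixes i :: 3 obtains "i = 0" | "i = 1" | "i = 2"
proof -
  have "(3::3) = 0" by simp
  then show ?thesis using exhaust_3[of i] that by auto
qed

lemma num4_cases: fixes i :: 4 obtains "i = 0" | "i = 1" | "i = 2" | "i = 3"
proof -
  have "(4::4) = 0" by simp
  then show ?thesis using exhaust_4[of i] that by auto
qed

lemma vec3_eq_iff: "(v::real^3) = w \<longleftrightarrow> v$0 = w$0 \<and> v$1 = w$1 \<and> v$2 = w$2"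
proof -
  have three: "(3::3) = 0" by simp
  show ?thesis unfolding vec_eq_iff forall_3 three by auto
qed

lemma vec4_eq_iff: "(v::real^4) = w \<longleftrightarrow> v$0 = w$0 \<and> v$1 = w$1 \<and> v$2 = w$2 \<and> v$3 = w$3"
proof -
  have four: "(4::4) = 0" by simp
  show ?thesis unfolding vec_eq_iff forall_4 four by auto
qed

definition vec3 :: "real \<Rightarrow> real \<Rightarrow> real \<Rightarrow> real^3" where
  "vec3 a b c = (\<chi> i. if i = 0 then a else if i = 1 then b else c)"

definition vec4 :: "real \<Rightarrow> real \<Rightarrow> real \<Rightarrow> real \<Rightarrow> real^4" where
  "vec4 a b c d = (\<chi> i. if i = 0 then a else if i = 1 then b else if i = 2 then c else d)"

lemma vec3_nth [simp]: "vec3 a b c $ 0 = a" "vec3 a b c $ 1 = b" "vec3 a b c $ 2 = c"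
  by (simp_all add: vec3_def)

lemma vec4_nth [simp]:
  "vec4 a b c d $ 0 = a" "vec4 a b c d $ 1 = b" "vec4 a b c d $ 2 = c" "vec4 a b c d $ 3 = d"
  by (simp_all add: vec4_def)

lemma inner_vec4: "(v::real^4) \<bullet> w = v$0 * w$0 + v$1 * w$1 + v$2 * w$2 + v$3 * w$3"
  by (simp add: inner_vec_def sum_UNIV_4)

lemma partial_eqI:
  fixes F :: "real^'n \<Rightarrow> real"
  assumes "((\<lambda>s. F (\<chi> m. if m = k then s else x$m)) has_real_derivative D) (at (x$k))"
  shows "partial F k x = D"
proof -
  have "x + t *\<^sub>R axis k 1 = (\<chi> m. if m = k then x$k + t else x$m)" for t
    by (simp add: vec_eq_iff axis_def)
  then have line: "(\<lambda>t. F (x + t *\<^sub>R axis k 1))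
      = (\<lambda>s. F (\<chi> m. if m = k then s else x$m)) \<circ> (\<lambda>t. x$k + t)"
    by auto
  have "((\<lambda>t. x$k + t) has_real_derivative 1) (at 0)"
    by (auto intro!: derivative_eq_intros)
  with assms have "((\<lambda>t. F (x + t *\<^sub>R axis k 1)) has_real_derivative D) (at 0)"
    unfolding line using DERIV_chain[of _ D "\<lambda>t. x$k + t" 0 1] by simp
  then show ?thesis
    unfolding partial_def by (rule DERIV_imp_deriv)
qed

lemma eventually_line_in_open:
  fixes x :: "'a::real_normed_vector"
  assumes "open U" "x \<in> U"
  shows "eventually (\<lambda>t::real. x + t *\<^sub>R v \<in> U) (nhds 0)"
proof -
  have "open ((\<lambda>t::real. x + t *\<^sub>R v) -` U)"
    by (rule open_vimage[OF assms(1)]) (intro continuous_intros)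
  with assms(2) show ?thesis
    using eventually_nhds_in_open by fastforce
qed

lemma partial_cong_open:
  assumes "open U" "x \<in> U" "\<And>y. y \<in> U \<Longrightarrow> F y = G y"
  shows "partial F i x = partial G i x"
  unfolding partial_def
  by (rule deriv_cong_ev[OF eventually_mono[OF eventually_line_in_open[OF assms(1,2)]]])
     (use assms(3) in auto)

section \<open>Elementary functions are smooth\<close>

inductive_set elementary_on :: "(real^'n) set \<Rightarrow> (real^'n \<Rightarrow> real) set" for U where
  elementary_on_const: "(\<lambda>u. k) \<in> elementary_on U"
| elementary_on_coord: "(\<lambda>u. u $ j) \<in> elementary_on U"
| elementary_on_add:
    "F \<in> elementary_on U \<Longrightarrow> G \<in> elementary_on U \<Longrightarrow> (\<lambda>u. F u + G u) \<in> elementary_on U"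
| elementary_on_mult:
    "F \<in> elementary_on U \<Longrightarrow> G \<in> elementary_on U \<Longrightarrow> (\<lambda>u. F u * G u) \<in> elementary_on U"
| elementary_on_inverse:
    "F \<in> elementary_on U \<Longrightarrow> (\<forall>u\<in>U. F u \<noteq> 0) \<Longrightarrow> (\<lambda>u. inverse (F u)) \<in> elementary_on U"
| elementary_on_sqrt:
    "F \<in> elementary_on U \<Longrightarrow> (\<forall>u\<in>U. F u > 0) \<Longrightarrow> (\<lambda>u. sqrt (F u)) \<in> elementary_on U"

lemma elementary_on_continuous_on: "F \<in> elementary_on U \<Longrightarrow> continuous_on U F"
  by (induction rule: elementary_on.induct) (auto intro!: continuous_intros)

lemma elementary_on_minus: "F \<in> elementary_on U \<Longrightarrow> (\<lambda>u. - F u) \<in> elementary_on U"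
  using elementary_on_mult[OF elementary_on_const[of "-1"]] by simp

lemma elementary_on_diff:
  "F \<in> elementary_on U \<Longrightarrow> G \<in> elementary_on U \<Longrightarrow> (\<lambda>u. F u - G u) \<in> elementary_on U"
  using elementary_on_add[OF _ elementary_on_minus] by simp

lemma elementary_on_divide:
  "F \<in> elementary_on U \<Longrightarrow> G \<in> elementary_on U \<Longrightarrow> \<forall>u\<in>U. G u \<noteq> 0 \<Longrightarrow>
    (\<lambda>u. F u / G u) \<in> elementary_on U"
  using elementary_on_mult[OF _ elementary_on_inverse] by (simp add: divide_inverse)

lemma elementary_on_power2: "F \<in> elementary_on U \<Longrightarrow> (\<lambda>u. (F u)^2) \<in> elementary_on U"
  using elementary_on_mult by (simp add: power2_eq_square)

lemma elementary_on_line_deriv: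
  assumes "F \<in> elementary_on U"
  shows "\<exists>F'\<in>elementary_on U. \<forall>x\<in>U. ((\<lambda>t. F (x + t *\<^sub>R axis i 1)) has_real_derivative F' x) (at 0)"
  using assms
proof (induction rule: elementary_on.induct)
  case (elementary_on_const k)
  show ?case
    by (auto intro!: bexI[of _ "\<lambda>u. 0"] elementary_on.intros derivative_eq_intros)
next
  case (elementary_on_coord j)
  show ?case
    by (auto intro!: bexI[of _ "\<lambda>u. if j = i then 1 else 0"] elementary_on.intros
        derivative_eq_intros simp: axis_def)
next
  case (elementary_on_add F G)
  then obtain F' G' where "F' \<in> elementary_on U" "G' \<in> elementary_on U"
    "\<forall>x\<in>U. ((\<lambda>t. F (x + t *\<^sub>R axis i 1)) has_real_derivative F' x) (at 0)"
    "\<forall>x\<in>U. ((\<lambda>t. G (x + t *\<^sub>R axis i 1)) has_real_derivative G' x) (at 0)"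
    by blast
  then show ?case
    by (auto intro!: bexI[of _ "\<lambda>u. F' u + G' u"] elementary_on.intros derivative_eq_intros)
next
  case (elementary_on_mult F G)
  then obtain F' G' where "F' \<in> elementary_on U" "G' \<in> elementary_on U"
    "\<forall>x\<in>U. ((\<lambda>t. F (x + t *\<^sub>R axis i 1)) has_real_derivative F' x) (at 0)"
    "\<forall>x\<in>U. ((\<lambda>t. G (x + t *\<^sub>R axis i 1)) has_real_derivative G' x) (at 0)"
    by blast
  with elementary_on_mult.hyps show ?case
    by (auto intro!: bexI[of _ "\<lambda>u. F' u * G u + F u * G' u"] elementary_on.intros
        derivative_eq_intros)
next
  case (elementary_on_inverse F)
  then obtain F' where "F' \<in> elementary_on U"
    "\<forall>x\<in>U. ((\<lambda>t. F (x + t *\<^sub>R axis i 1)) has_real_derivative F' x) (at 0)"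
    by blast
  with elementary_on_inverse.hyps show ?case
    by (auto intro!: bexI[of _ "\<lambda>u. - F' u * (inverse (F u) * inverse (F u))"]
        elementary_on.intros elementary_on_minus derivative_eq_intros simp: power2_eq_square)
next
  case (elementary_on_sqrt F)
  then obtain F' where "F' \<in> elementary_on U"
    "\<forall>x\<in>U. ((\<lambda>t. F (x + t *\<^sub>R axis i 1)) has_real_derivative F' x) (at 0)"
    by blast
  with elementary_on_sqrt.hyps show ?case
    by (auto intro!: bexI[of _ "\<lambda>u. F' u * inverse (2 * sqrt (F u))"]
        elementary_on.intros derivative_eq_intros simp: field_simps)
qed

lemma ipartial_elementary_on:
  assumes "open U" "F \<in> elementary_on U"
  shows "\<exists>G\<in>elementary_on U. \<forall>x\<in>U. ipartial is F x = G x"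
proof (induction "is")
  case Nil
  then show ?case using assms by auto
next
  case (Cons i "is")
  then obtain G where G: "G \<in> elementary_on U" "\<forall>x\<in>U. ipartial is F x = G x"
    by blast
  obtain G' where G': "G' \<in> elementary_on U"
    "\<forall>x\<in>U. ((\<lambda>t. G (x + t *\<^sub>R axis i 1)) has_real_derivative G' x) (at 0)"
    using elementary_on_line_deriv[OF G(1)] by blast
  have "ipartial (i # is) F x = G' x" if "x \<in> U" for x
  proof -
    have "ipartial (i # is) F x = partial G i x"
      unfolding ipartial.simps by (rule partial_cong_open[OF assms(1) that]) (simp add: G(2))
    also have "\<dots> = G' x"
      unfolding partial_def using G'(2) that by (simp add: DERIV_imp_deriv)
    finally show ?thesis .
  qed
  with G' show ?case by blast
qed

lemma elementary_on_smooth_on: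
  assumes "open U" "F \<in> elementary_on U"
  shows "smooth_on U F"
  unfolding smooth_on_def
proof (intro conjI allI ballI assms(1))
  fix "is"
  obtain G where G: "G \<in> elementary_on U" "\<forall>x\<in>U. ipartial is F x = G x"
    using ipartial_elementary_on[OF assms] by blast
  show "continuous_on U (ipartial is F)"
    using continuous_on_cong[of U U "ipartial is F" G] elementary_on_continuous_on[OF G(1)] G(2)
    by auto
  fix i x
  assume x: "x \<in> U"
  obtain G' where G': "\<forall>x\<in>U. ((\<lambda>t. G (x + t *\<^sub>R axis i 1)) has_real_derivative G' x) (at 0)"
    using elementary_on_line_deriv[OF G(1)] by blast
  have "eventually (\<lambda>t. ipartial is F (x + t *\<^sub>R axis i 1) = G (x + t *\<^sub>R axis i 1)) (nhds 0)"
    using eventually_mono[OF eventually_line_in_open[OF assms(1) x]] G(2) by fastforce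
  then have "((\<lambda>t. ipartial is F (x + t *\<^sub>R axis i 1)) has_real_derivative G' x) (at 0)"
    using DERIV_cong_ev[OF refl _ refl] G' x by fastforce
  then show "(\<lambda>t. ipartial is F (x + t *\<^sub>R axis i 1)) differentiable at 0"
    using real_differentiable_def by blast
qed

section \<open>Quadratic forms and signature\<close>

lemma quad_form_uminus: "quad_form (- A) v = - quad_form A v"
  unfolding quad_form_def
  by (simp add: matrix_vector_mult_def inner_vec_def sum_negf sum_distrib_left)

lemma dim_add_le_if_Int_zero:
  fixes V W :: "(real^'n) set"
  assumes "subspace V" "subspace W" "V \<inter> W \<subseteq> {0}"
  shows "dim V + dim W \<le> CARD('n)"
proof -
  have "dim {x + y |x y. x \<in> V \<and> y \<in> W} + dim (V \<inter> W) = dim V + dim W"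
    by (rule dim_sums_Int) (use assms in auto)
  moreover have "dim (V \<inter> W) = 0"
    using assms(3) by simp
  moreover have "dim {x + y |x y. x \<in> V \<and> y \<in> W} \<le> CARD('n)"
    by (rule dim_subset_UNIV_cart)
  ultimately show ?thesis by simp
qed

lemma dim_span_orthogonal_pair:
  fixes a b :: "'a::euclidean_space"
  assumes "a \<noteq> 0" "b \<noteq> 0" "a \<bullet> b = 0"
  shows "dim (span {a, b}) = 2"
proof -
  have "independent {a, b}"
    by (rule pairwise_orthogonal_independent)
       (use assms in \<open>auto simp: pairwise_def orthogonal_def inner_commute\<close>)
  then have "dim (span {a, b}) = card {a, b}"
    by (rule dim_span_eq_card_independent)
  moreover have "a \<noteq> b" using assms by auto
  ultimately show ?thesis by simp
qed

lemma span_pairE: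
  fixes a b :: "'a::real_vector"
  assumes "z \<in> span {a, b}"
  obtains k t where "z = k *\<^sub>R a + t *\<^sub>R b"
proof -
  obtain k t where "z - k *\<^sub>R a = t *\<^sub>R b"
    using assms unfolding span_breakdown_eq span_singleton by auto
  then show ?thesis
    using that[of k t] by (simp add: algebra_simps)
qed

lemma pos_index_add_dim_le:
  fixes A :: "real^'n^'n"
  assumes "pos_index A p" "subspace W" "\<forall>w\<in>W. quad_form A w \<le> 0"
  shows "p + dim W \<le> CARD('n)"
proof -
  obtain V where V: "subspace V" "dim V = p" "\<forall>v\<in>V. v \<noteq> 0 \<longrightarrow> quad_form A v > 0"
    using assms(1) unfolding pos_index_def by blast
  have "V \<inter> W \<subseteq> {0}"
    using V(3) assms(3) by force
  then show ?thesis
    using dim_add_le_if_Int_zero[OF V(1) assms(2)] V(2) by simp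
qed

lemma pos_indexI:
  fixes A :: "real^'n^'n"
  assumes V: "subspace V" "dim V = p" "\<forall>v\<in>V. v \<noteq> 0 \<longrightarrow> quad_form A v > 0"
    and W: "subspace W" "p + dim W = CARD('n)" "\<forall>w\<in>W. w \<noteq> 0 \<longrightarrow> quad_form A w \<le> 0"
  shows "pos_index A p"
  unfolding pos_index_def
proof (intro conjI allI impI)
  show "\<exists>V. subspace V \<and> dim V = p \<and> (\<forall>v\<in>V. v \<noteq> 0 \<longrightarrow> quad_form A v > 0)"
    using V by blast
  fix V'
  assume V': "subspace V' \<and> (\<forall>v\<in>V'. v \<noteq> 0 \<longrightarrow> quad_form A v > 0)"
  have "V' \<inter> W \<subseteq> {0}"
    using V' W(3) by force
  then show "dim V' \<le> p"
    using dim_add_le_if_Int_zero[of V' W] V' W(1,2) by simp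
qed

lemma has_signatureI:
  fixes A :: "real^'n^'n"
  assumes V: "subspace V" "dim V = p" "\<forall>v\<in>V. v \<noteq> 0 \<longrightarrow> quad_form A v > 0"
    and W: "subspace W" "dim W = q" "\<forall>w\<in>W. w \<noteq> 0 \<longrightarrow> quad_form A w < 0"
    and "p + q = CARD('n)"
  shows "has_signature A p q"
  unfolding has_signature_def
proof
  show "pos_index A p"
    using pos_indexI[OF V W(1)] W(2,3) \<open>p + q = CARD('n)\<close> by force
  show "pos_index (- A) q"
    using pos_indexI[OF W(1,2) _ V(1)] V(2,3) W(3) \<open>p + q = CARD('n)\<close>
    by (force simp: quad_form_uminus)
qed

section \<open>The index cone on the level set\<close>

definition df5 :: "4 \<Rightarrow> real^4 \<Rightarrow> real" where
  "df5 j x = (if j = 0 then 2 * x$0 * x$3 else if j = 1 then 2 * x$1 * x$3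
     else if j = 2 then - 2 * x$2 * x$3 else (x$0)^2 + (x$1)^2 - (x$2)^2 - 3 * (x$3)^2)"

definition d2f5 :: "4 \<Rightarrow> 4 \<Rightarrow> real^4 \<Rightarrow> real" where
  "d2f5 i j x = (if i = 3 \<and> j = 3 then - 6 * x$3
     else if i = 3 then (if j = 0 then 2 * x$0 else if j = 1 then 2 * x$1 else - 2 * x$2)
     else if j = 3 then (if i = 0 then 2 * x$0 else if i = 1 then 2 * x$1 else - 2 * x$2)
     else if i = j then (if i = 2 then - 2 * x$3 else 2 * x$3) else 0)"

lemma partial_f5: "partial f5 j x = df5 j x"
  by (cases j rule: num4_cases; intro partial_eqI;
      auto simp: f5_def df5_def algebra_simps power2_eq_square intro!: derivative_eq_intros)

lemma partial_df5: "partial (df5 j) i x = d2f5 i j x"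
  by (cases j rule: num4_cases; cases i rule: num4_cases; intro partial_eqI;
      auto simp: df5_def d2f5_def intro!: derivative_eq_intros)

lemma hessian_f5: "hessian f5 x = (\<chi> i j. d2f5 i j x)"
proof -
  have "partial f5 j = df5 j" for j
    using partial_f5 by blast
  then show ?thesis
    unfolding hessian_def by (simp add: partial_df5)
qed

definition hess_form_f5 :: "real^4 \<Rightarrow> real^4 \<Rightarrow> real" where
  "hess_form_f5 x v = 2 * x$3 * ((v$0)^2 + (v$1)^2 - (v$2)^2)
     + 4 * v$3 * (x$0 * v$0 + x$1 * v$1 - x$2 * v$2) - 6 * x$3 * (v$3)^2"

lemma quad_form_hessian_f5: "quad_form (hessian f5 x) v = hess_form_f5 x v"
  unfolding quad_form_def hessian_f5 matrix_vector_mult_def inner_vec_def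
  by (simp add: sum_UNIV_4 d2f5_def hess_form_f5_def algebra_simps power2_eq_square)

lemma hess_form_f5_complete_square:
  "- 3 * x$3 * hess_form_f5 x v =
     2 * (x$0 * v$0 + x$1 * v$1 - x$2 * v$2 - 3 * x$3 * v$3)^2
     - 2 * ((x$0 * v$0 + x$1 * v$1 - x$2 * v$2)^2 + 3 * (x$3)^2 * ((v$0)^2 + (v$1)^2 - (v$2)^2))"
  by (simp add: hess_form_f5_def algebra_simps power2_eq_square)

text \<open>With L the Lorentz form and y = (a, b, d), the form is m^2 + 3 c^2 L(w) with m = L(y, w).
  The identity lorentz_identity is the reverse Cauchy-Schwarz inequality m^2 \<ge> L(y) L(w) for
  the timelike vector y, and L(y) < -3 c^2.\<close>

lemma cone_form_pos:
  fixes a b d p q s c :: real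
  assumes c: "c \<noteq> 0" and cone: "a^2 + b^2 - d^2 + 3*c^2 < 0" and nz: "p \<noteq> 0 \<or> q \<noteq> 0 \<or> s \<noteq> 0"
  shows "0 < (a*p + b*q - d * s)^2 + 3*c^2*(p^2 + q^2 - s^2)"
proof -
  define T where "T = d^2 - a^2 - b^2"
  define m where "m = a*p + b*q - d * s"
  define L where "L = p^2 + q^2 - s^2"
  have c2: "c^2 > 0" using c by simp
  have T: "T > 3*c^2" using cone by (simp add: T_def)
  then have T0: "T > 0" using c2 by linarith
  have d: "d \<noteq> 0"
  proof
    assume "d = 0"
    then have "a^2 + b^2 + 3*c^2 < 0" using cone by simp
    moreover have "a^2 + b^2 + 3*c^2 \<ge> 0" by (intro add_nonneg_nonneg) auto
    ultimately show False by linarith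
  qed
  have lorentz_identity: "d^2 * (m^2 + T*L)
      = T*((d*p - a * s)^2 + (d*q - b * s)^2) + (a*(d*p - a * s) + b*(d*q - b * s))^2"
    by (simp add: m_def T_def L_def algebra_simps power2_eq_square)
  then have "d^2 * (m^2 + T*L) \<ge> 0"
    using T0 by simp
  then have nonneg: "m^2 + T*L \<ge> 0"
    using d by (simp add: zero_le_mult_iff)
  consider "L > 0" | "L < 0" | "L = 0" by linarith
  then show ?thesis
  proof cases
    case 1
    then show ?thesis using c2 by (simp add: L_def[symmetric] add_nonneg_pos)
  next
    case 2
    then have "(T - 3*c^2) * L < 0" using T by (simp add: mult_pos_neg)
    then show ?thesis using nonneg by (simp add: L_def[symmetric] m_def[symmetric] algebra_simps)
  next
    case 3
    have "m \<noteq> 0"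
    proof
      assume "m = 0"
      then have "T*((d*p - a * s)^2 + (d*q - b * s)^2) + (a*(d*p - a * s) + b*(d*q - b * s))^2 = 0"
        using lorentz_identity 3 by simp
      moreover have "T * ((d*p - a * s)^2 + (d*q - b * s)^2) \<ge> 0"
        using T0 by simp
      ultimately have "T * ((d*p - a * s)^2 + (d*q - b * s)^2) = 0"
        using zero_le_power2[of "a*(d*p - a * s) + b*(d*q - b * s)"] by linarith
      then have "(d*p - a * s)^2 + (d*q - b * s)^2 = 0"
        using T0 by simp
      then have dp: "d*p = a * s" and dq: "d*q = b * s"
        by (simp_all add: sum_power2_eq_zero_iff)
      have "0 = d^2 * L" using 3 by simp
      also have "\<dots> = (d*p)^2 + (d*q)^2 - d^2 * s^2"
        by (simp add: L_def algebra_simps power2_eq_square)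
      also have "\<dots> = - T * s^2"
        by (simp add: dp dq T_def algebra_simps power2_eq_square)
      finally have "s = 0" using T0 by simp
      then show False using nz dp dq d by simp
    qed
    then show ?thesis using 3 by (simp add: L_def[symmetric] m_def[symmetric])
  qed
qed

lemma cone_form_nonpos_vector:
  fixes a b d c :: real
  assumes "a^2 + b^2 - d^2 + 3*c^2 \<ge> 0"
  obtains p q s where "p \<noteq> 0 \<or> q \<noteq> 0 \<or> s \<noteq> 0" "(a*p + b*q - d * s)^2 + 3*c^2*(p^2 + q^2 - s^2) \<le> 0"
proof -
  define S where "S = a^2 + b^2 - d^2"
  consider "S > 0" | "S \<le> 0" "a \<noteq> 0 \<or> b \<noteq> 0 \<or> d \<noteq> 0" | "a = 0" "b = 0" "d = 0" by force
  then show ?thesis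
  proof cases
    case 1
    have ab: "a^2 + b^2 > 0"
      using 1 zero_le_power2[of d] unfolding S_def by linarith
    have "(a*(d*a) + b*(d*b) - d*(a^2 + b^2))^2 + 3*c^2*((d*a)^2 + (d*b)^2 - (a^2 + b^2)^2)
        = - 3*c^2*(a^2 + b^2)*S"
      by (simp add: S_def algebra_simps power2_eq_square)
    also have "\<dots> \<le> 0"
      using ab 1 by (simp add: mult_nonneg_nonneg)
    finally show ?thesis
      using ab by (intro that[of "d*a" "d*b" "a^2 + b^2"]) auto
  next
    case 2
    have "(a*a + b*b - d*d)^2 + 3*c^2*(a^2 + b^2 - d^2) = S * (S + 3*c^2)"
      by (simp add: S_def algebra_simps power2_eq_square)
    also have "\<dots> \<le> 0"
      using 2 assms by (simp add: S_def mult_nonpos_nonneg)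
    finally show ?thesis
      using 2 by (intro that[of a b d]) auto
  next
    case 3
    then show ?thesis by (intro that[of 0 0 1]) auto
  qed
qed

lemma has_signature_hessian_f5:
  fixes x :: "real^4"
  assumes x3: "x$3 < 0" and cone: "(x$0)^2 + (x$1)^2 - (x$2)^2 + 3 * (x$3)^2 < 0"
  shows "has_signature (hessian f5 x) 1 3"
proof -
  define h where "h = vec4 (x$0) (x$1) (- x$2) (- 3 * x$3)"
  have "h \<noteq> 0" using x3 by (auto simp: h_def vec4_eq_iff)
  then have W: "subspace {v. h \<bullet> v = 0}" "dim {v. h \<bullet> v = 0} = 3"
    using dim_hyperplane[of h] by (simp_all add: subspace_hyperplane)
  have neg: "hess_form_f5 x v < 0" if "h \<bullet> v = 0" "v \<noteq> 0" for v
  proof -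
    from that(1) have hv: "x$0 * v$0 + x$1 * v$1 - x$2 * v$2 - 3 * x$3 * v$3 = 0"
      by (simp add: h_def inner_vec4)
    have "v$0 \<noteq> 0 \<or> v$1 \<noteq> 0 \<or> v$2 \<noteq> 0"
      using that(2) hv x3 by (auto simp: vec4_eq_iff)
    then have "0 < (x$0 * v$0 + x$1 * v$1 - x$2 * v$2)^2
        + 3 * (x$3)^2 * ((v$0)^2 + (v$1)^2 - (v$2)^2)"
      using cone_form_pos[of "x$3" "x$0" "x$1" "x$2"] x3 cone by simp
    then have "- 3 * x$3 * hess_form_f5 x v < 0"
      unfolding hess_form_f5_complete_square hv by simp
    then show ?thesis
      using x3 by (simp add: zero_less_mult_iff)
  qed
  have pos: "hess_form_f5 x v > 0" if "v \<in> span {axis 3 1}" "v \<noteq> 0" for v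
    using that x3 by (auto simp: span_singleton hess_form_f5_def axis_def intro!: mult_neg_pos)
  show ?thesis
  proof (rule has_signatureI[of "span {axis 3 1}" 1 _ "{v. h \<bullet> v = 0}" 3])
    show "dim (span {axis 3 1 :: real^4}) = 1"
      by (simp add: axis_eq_0_iff)
  qed (use W neg pos in \<open>auto simp: quad_form_hessian_f5\<close>)
qed

text \<open>Both conditions come from the negative index 3: otherwise the Hessian form is
  positive semidefinite on a plane, which must meet the negative definite 3-space.\<close>

lemma index_cone_f5_level_cond:
  fixes x :: "real^4"
  assumes sig: "has_signature (hessian f5 x) 1 3" and f1: "f5 x = 1"
  shows "x$3 < 0 \<and> (x$0)^2 + (x$1)^2 - (x$2)^2 + 3 * (x$3)^2 < 0"
proof -
  have no_semidef_plane: False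
    if "dim (span {a, b}) = 2" "\<forall>v\<in>span {a, b}. hess_form_f5 x v \<ge> 0" for a b :: "real^4"
  proof -
    have "pos_index (- hessian f5 x) 3"
      using sig unfolding has_signature_def by simp
    moreover have "\<forall>v\<in>span {a, b}. quad_form (- hessian f5 x) v \<le> 0"
      using that(2) by (simp add: quad_form_uminus quad_form_hessian_f5)
    ultimately have "3 + dim (span {a, b}) \<le> CARD(4)"
      using pos_index_add_dim_le[of "- hessian f5 x" 3 "span {a, b}"] by simp
    then show False
      using that(1) by simp
  qed
  have "x$3 \<noteq> 0"
    using f1 by (auto simp: f5_def)
  moreover have "\<not> x$3 > 0"
  proof
    assume "x$3 > 0"
    have "hess_form_f5 x v \<ge> 0" if v: "v \<in> span {axis 0 1, axis 1 1}" for v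
    proof -
      obtain k t where "v = k *\<^sub>R axis 0 1 + t *\<^sub>R axis 1 1"
        using v by (rule span_pairE)
      then show ?thesis
        using \<open>x$3 > 0\<close> by (simp add: hess_form_f5_def axis_def)
    qed
    moreover have "dim (span {axis 0 1, axis 1 1 :: real^4}) = 2"
      by (rule dim_span_orthogonal_pair) (auto simp: axis_eq_0_iff inner_axis_axis)
    ultimately show False
      using no_semidef_plane by blast
  qed
  ultimately have x3: "x$3 < 0"
    by linarith
  moreover have "(x$0)^2 + (x$1)^2 - (x$2)^2 + 3 * (x$3)^2 < 0"
  proof (rule ccontr)
    assume "\<not> ?thesis"
    then have "(x$0)^2 + (x$1)^2 - (x$2)^2 + 3 * (x$3)^2 \<ge> 0"
      by simp
    then obtain p q s where pqs: "p \<noteq> 0 \<or> q \<noteq> 0 \<or> s \<noteq> 0"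
      and nonpos: "(x$0 * p + x$1 * q - x$2 * s)^2 + 3 * (x$3)^2 * (p^2 + q^2 - s^2) \<le> 0"
      by (rule cone_form_nonpos_vector)
    define w where "w = vec4 p q s 0"
    have "hess_form_f5 x z \<ge> 0" if z: "z \<in> span {axis 3 1, w}" for z
    proof -
      obtain k t where z_eq: "z = k *\<^sub>R axis 3 1 + t *\<^sub>R w"
        using z by (rule span_pairE)
      have "- 3 * x$3 * hess_form_f5 x z
          = 2 * (t * (x$0 * p + x$1 * q - x$2 * s) - 3 * x$3 * k)^2
            - 2 * t^2 * ((x$0 * p + x$1 * q - x$2 * s)^2 + 3 * (x$3)^2 * (p^2 + q^2 - s^2))"
        unfolding hess_form_f5_complete_square z_eq
        by (simp add: w_def axis_def algebra_simps power2_eq_square)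
      also have "\<dots> \<ge> 0"
        using mult_nonneg_nonpos[OF zero_le_power2[of t] nonpos]
          zero_le_power2[of "t * (x$0 * p + x$1 * q - x$2 * s) - 3 * x$3 * k"] by linarith
      finally show ?thesis
        using x3 by (simp add: mult_le_0_iff)
    qed
    moreover have "dim (span {axis 3 1, w}) = 2"
      using pqs by (intro dim_span_orthogonal_pair)
        (auto simp: axis_eq_0_iff w_def vec4_eq_iff inner_vec4 axis_def)
    ultimately show False
      using no_semidef_plane by blast
  qed
  ultimately show ?thesis
    by blast
qed

lemma M5_iff:
  "x \<in> M5 \<longleftrightarrow> f5 x = 1 \<and> x$3 < 0 \<and> (x$0)^2 + (x$1)^2 - (x$2)^2 + 3 * (x$3)^2 < 0"
  using index_cone_f5_level_cond[of x] has_signature_hessian_f5[of x]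
  by (auto simp: M5_def index_cone_def)

section \<open>A parametrisation of the level set\<close>

definition rad :: "real \<Rightarrow> real" where
  "rad c = sqrt (1/c - c^2)"

definition drad :: "real \<Rightarrow> real" where
  "drad c = (- 1/c^2 - 2*c) / (2 * rad c)"

lemma rad_radicand_pos:
  fixes c :: real
  assumes "0 < c" "4 * c^3 < 1"
  shows "1/c - c^2 > 0"
proof -
  have "c * c^2 < 1"
    using assms(2) by (simp add: power3_eq_cube power2_eq_square)
  then show ?thesis
    using assms(1) by (simp add: field_simps)
qed

lemma rad_pos: "0 < c \<Longrightarrow> 4 * c^3 < 1 \<Longrightarrow> rad c > 0"
  using rad_radicand_pos by (simp add: rad_def)

lemma rad_sq_eq: "0 < c \<Longrightarrow> 4 * c^3 < 1 \<Longrightarrow> c * (rad c)^2 = 1 - c^3"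
  using rad_radicand_pos[of c] by (simp add: rad_def field_simps power2_eq_square power3_eq_cube)

lemma drad_eq: "0 < c \<Longrightarrow> 4 * c^3 < 1 \<Longrightarrow> 2 * c^2 * rad c * drad c = - (1 + 2 * c^3)"
  using rad_pos[of c] by (simp add: drad_def field_simps power2_eq_square power3_eq_cube)

lemma has_real_derivative_rad:
  assumes "0 < c" "4 * c^3 < 1"
  shows "(rad has_real_derivative drad c) (at c)"
proof -
  have "((\<lambda>c. sqrt (1/c - c^2)) has_real_derivative
      inverse (sqrt (1/c - c^2)) / 2 * (- 1/c^2 - 2*c)) (at c)"
    by (rule DERIV_chain2[where g = "\<lambda>c. 1/c - c^2",
          OF DERIV_real_sqrt[OF rad_radicand_pos[OF assms]]])
       (use assms in \<open>auto intro!: derivative_eq_intros simp: power2_eq_square field_simps\<close>)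
  then show ?thesis
    unfolding rad_def[abs_def] drad_def by (simp add: field_simps)
qed

text \<open>For fixed c = u$0, the upper half plane model (X, Y) = (u$1, u$2), Y > 0, of the hyperbolic
  plane is mapped onto the sheet \<sigma> x2 > 0 of the hyperboloid x0^2 + x1^2 - x2^2 = -(rad c)^2
  in the hyperplane x3 = -c; the sign \<sigma> = 1 or -1 selects the sheet.\<close>

definition param :: "real \<Rightarrow> real^3 \<Rightarrow> real^4" where
  "param \<sigma> u = vec4
     (rad (u$0) * (u$1 / u$2))
     (rad (u$0) * (((u$1)^2 + (u$2)^2 - 1) / (2 * u$2)))
     (\<sigma> * rad (u$0) * (((u$1)^2 + (u$2)^2 + 1) / (2 * u$2)))
     (- u$0)"

lemma param_nth [simp]:
  "param \<sigma> u $ 0 = rad (u$0) * (u$1 / u$2)"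
  "param \<sigma> u $ 1 = rad (u$0) * (((u$1)^2 + (u$2)^2 - 1) / (2 * u$2))"
  "param \<sigma> u $ 2 = \<sigma> * rad (u$0) * (((u$1)^2 + (u$2)^2 + 1) / (2 * u$2))"
  "param \<sigma> u $ 3 = - u$0"
  by (simp_all add: param_def)

definition param_dom :: "(real^3) set" where
  "param_dom = {u. 0 < u$0 \<and> 4 * (u$0)^3 < 1 \<and> 0 < u$2}"

definition sheet :: "real \<Rightarrow> (real^4) set" where
  "sheet \<sigma> = {x. 0 < \<sigma> * x$2}"

lemma open_param_dom: "open param_dom"
  unfolding param_dom_def by (intro open_Collect_conj open_Collect_less continuous_intros)

lemma open_sheet: "open (sheet \<sigma>)"
  unfolding sheet_def by (intro open_Collect_less continuous_intros)

lemma param_domD: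
  assumes "u \<in> param_dom"
  shows "0 < u$0" "4 * (u$0)^3 < 1" "0 < u$2" "rad (u$0) > 0" "u$0 * (rad (u$0))^2 = 1 - (u$0)^3"
  using assms rad_pos rad_sq_eq by (auto simp: param_dom_def)

lemma param_lorentz:
  assumes "\<sigma>^2 = 1" "u$2 \<noteq> 0"
  shows "(param \<sigma> u $ 0)^2 + (param \<sigma> u $ 1)^2 - (param \<sigma> u $ 2)^2 = - (rad (u$0)^2)"
  using assms(2)
  by (simp add: power_divide power_mult_distrib field_simps) (use assms(1) in algebra)

lemma param_in_M5:
  assumes "u \<in> param_dom" "\<sigma>^2 = 1"
  shows "param \<sigma> u \<in> M5"
proof -
  note u = param_domD[OF assms(1)]
  have lorentz: "(param \<sigma> u $ 0)^2 + (param \<sigma> u $ 1)^2 - (param \<sigma> u $ 2)^2 = - (rad (u$0)^2)"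
    using param_lorentz assms(2) u(3) by simp
  have "f5 (param \<sigma> u) = u$0 * (rad (u$0))^2 + (u$0)^3"
    unfolding f5_def lorentz by (simp add: algebra_simps power2_eq_square power3_eq_cube)
  also have "\<dots> = 1"
    using u(5) by simp
  finally have "f5 (param \<sigma> u) = 1" .
  moreover have "u$0 * (- (rad (u$0)^2) + 3 * (u$0)^2) = 4 * (u$0)^3 - 1"
    using u(5) by (simp add: algebra_simps power2_eq_square power3_eq_cube)
  then have "u$0 * (- (rad (u$0)^2) + 3 * (u$0)^2) < 0"
    using u(2) by simp
  then have "- (rad (u$0)^2) + 3 * (u$0)^2 < 0"
    using u(1) by (simp only: mult_less_0_iff) simp
  ultimately show ?thesis
    unfolding M5_iff lorentz using u(1) by simp
qed

lemma param_in_sheet: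
  assumes "u \<in> param_dom" "\<sigma>^2 = 1"
  shows "param \<sigma> u \<in> sheet \<sigma>"
proof -
  note u = param_domD[OF assms(1)]
  have "\<sigma> * param \<sigma> u $ 2 = \<sigma>^2 * rad (u$0) * (((u$1)^2 + (u$2)^2 + 1) / (2 * u$2))"
    by (simp add: power2_eq_square)
  also have "\<dots> > 0"
    using assms(2) u by (intro mult_pos_pos divide_pos_pos add_nonneg_pos) auto
  finally show ?thesis
    by (simp add: sheet_def)
qed

lemma M5_height:
  assumes "x \<in> M5"
  shows "0 < - x$3" "4 * (- x$3)^3 < 1" "(x$0)^2 + (x$1)^2 - (x$2)^2 = - (rad (- x$3)^2)"
proof -
  define c where "c = - x$3"
  define S where "S = (x$0)^2 + (x$1)^2 - (x$2)^2"
  have "f5 x = 1" and c: "0 < c" and cone: "S + 3 * c^2 < 0"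
    using assms by (simp_all add: M5_iff c_def S_def)
  then have level: "c * S = c^3 - 1"
    by (simp add: f5_def c_def S_def algebra_simps power2_eq_square power3_eq_cube)
  have "c * (S + 3 * c^2) < 0"
    using cone c by (simp add: mult_pos_neg)
  then have c3: "4 * c^3 < 1"
    using level by (simp add: algebra_simps power2_eq_square power3_eq_cube)
  have "c * S = c * (- (rad c ^ 2))"
    using level rad_sq_eq[OF c c3] by simp
  then have "S = - (rad c ^ 2)"
    using c by (metis mult_cancel_left order_less_irrefl)
  then show "0 < - x$3" "4 * (- x$3)^3 < 1" "(x$0)^2 + (x$1)^2 - (x$2)^2 = - (rad (- x$3)^2)"
    using c c3 by (simp_all add: c_def S_def)
qed

lemma M5_sheet:
  assumes "x \<in> M5"
  obtains \<sigma> :: real where "\<sigma>^2 = 1" "x \<in> sheet \<sigma>"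
proof -
  have "(x$2)^2 > 0"
    using M5_height(3)[OF assms] rad_pos[OF M5_height(1,2)[OF assms]]
      zero_le_power2[of "x$0"] zero_le_power2[of "x$1"] zero_less_power2[of "rad (- x$3)"]
    by linarith
  then have "x$2 \<noteq> 0"
    by simp
  then show ?thesis
    using that[of "sgn (x$2)"] by (simp add: sheet_def sgn_if)
qed

lemma param_diff:
  assumes "\<sigma>^2 = 1" "u$2 \<noteq> 0"
  shows "\<sigma> * param \<sigma> u $ 2 - param \<sigma> u $ 1 = rad (u$0) / u$2"
  using assms(2) by (simp add: field_simps) (use assms(1) in algebra)

lemma param_onto:
  assumes \<sigma>: "\<sigma>^2 = 1" and x: "x \<in> M5" "x \<in> sheet \<sigma>"
  obtains u where "u \<in> param_dom" "param \<sigma> u = x"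
proof -
  define c where "c = - x$3"
  have c: "0 < c" "4 * c^3 < 1" and S: "(x$0)^2 + (x$1)^2 - (x$2)^2 = - (rad c ^ 2)"
    using M5_height[OF x(1)] by (simp_all add: c_def)
  define r where "r = rad c"
  have r: "r > 0"
    using rad_pos[OF c] by (simp add: r_def)
  define z where "z = \<sigma> * x$2"
  have z: "z > 0"
    using x(2) by (simp add: z_def sheet_def)
  have z2: "z^2 = (x$2)^2"
    using \<sigma> by (simp add: z_def power_mult_distrib)
  define D where "D = z - x$1"
  have "(z - x$1) * (z + x$1) = (x$0)^2 + r^2"
    using S z2 by (simp add: r_def algebra_simps power2_eq_square)
  also have "\<dots> > 0"
    using r by (simp add: add_nonneg_pos)
  finally have D: "D > 0"
    using z unfolding D_def zero_less_mult_iff by linarith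
  define u where "u = vec3 c (x$0 / D) (r / D)"
  have u: "u \<in> param_dom"
    using c r D by (simp add: param_dom_def u_def)
  have "param \<sigma> u $ 0 = x$0"
    using D r by (simp add: u_def r_def)
  moreover have "param \<sigma> u $ 1 = x$1" "param \<sigma> u $ 2 = x$2"
    using D r S \<sigma> by (simp_all add: u_def r_def power_divide field_simps)
      (use z_def D_def z2 in algebra)+
  moreover have "param \<sigma> u $ 3 = x$3"
    by (simp add: u_def c_def)
  ultimately show ?thesis
    using that u by (simp add: vec4_eq_iff)
qed

lemma param_image:
  assumes "\<sigma>^2 = 1"
  shows "param \<sigma> ` param_dom = sheet \<sigma> \<inter> M5"
proof
  show "param \<sigma> ` param_dom \<subseteq> sheet \<sigma> \<inter> M5"
    using param_in_M5[OF _ assms] param_in_sheet[OF _ assms] by auto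
  show "sheet \<sigma> \<inter> M5 \<subseteq> param \<sigma> ` param_dom"
  proof
    fix x
    assume "x \<in> sheet \<sigma> \<inter> M5"
    then obtain u where "u \<in> param_dom" "param \<sigma> u = x"
      using param_onto[OF assms] by blast
    then show "x \<in> param \<sigma> ` param_dom"
      by blast
  qed
qed

lemma param_inj:
  assumes "\<sigma>^2 = 1"
  shows "inj_on (param \<sigma>) param_dom"
proof (rule inj_onI)
  fix u v
  assume u: "u \<in> param_dom" and v: "v \<in> param_dom" and eq: "param \<sigma> u = param \<sigma> v"
  note u' = param_domD[OF u] and v' = param_domD[OF v]
  have c: "u$0 = v$0"
    using arg_cong[OF eq, of "\<lambda>x. x $ 3"] by simp
  have "rad (u$0) / u$2 = rad (v$0) / v$2"
    using param_diff[OF assms] u'(3) v'(3) eq by (metis less_irrefl)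
  then have Y: "u$2 = v$2"
    using u'(3,4) v'(3) c by (simp add: field_simps)
  have "rad (u$0) * (u$1 / u$2) = rad (v$0) * (v$1 / v$2)"
    using arg_cong[OF eq, of "\<lambda>x. x $ 0"] by simp
  then have X: "u$1 = v$1"
    using u'(3,4) Y c by (simp add: field_simps)
  show "u = v"
    using c X Y by (simp add: vec3_eq_iff)
qed

definition param_jac :: "real \<Rightarrow> 4 \<Rightarrow> 3 \<Rightarrow> real^3 \<Rightarrow> real" where
  "param_jac \<sigma> k i u = (let c = u$0; X = u$1; Y = u$2; r = rad c; d = drad c in
     if k = 0 then (if i = 0 then d * (X / Y) else if i = 1 then r / Y else - r * X / Y^2)
     else if k = 1 then
       (if i = 0 then d * ((X^2 + Y^2 - 1) / (2 * Y)) else if i = 1 then r * X / Y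
        else r * (Y^2 - X^2 + 1) / (2 * Y^2))
     else if k = 2 then
       (if i = 0 then \<sigma> * d * ((X^2 + Y^2 + 1) / (2 * Y)) else if i = 1 then \<sigma> * r * X / Y
        else \<sigma> * r * (Y^2 - X^2 - 1) / (2 * Y^2))
     else (if i = 0 then -1 else 0))"

lemma jac_param:
  assumes "u \<in> param_dom"
  shows "jac (param \<sigma>) k i u = param_jac \<sigma> k i u"
proof -
  note u = param_domD[OF assms]
  have rad': "(rad has_real_derivative drad (u$0)) (at (u$0))"
    by (rule has_real_derivative_rad[OF u(1,2)])
  show ?thesis
    unfolding jac_def
    by (cases k rule: num4_cases; cases i rule: num3_cases; (rule partial_eqI);
        use u(3) in \<open>auto simp: param_jac_def Let_def intro!: derivative_eq_intros rad'\<close>;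
        simp add: field_simps power2_eq_square)
qed

lemma param_immersion:
  assumes u: "u \<in> param_dom" and \<sigma>: "\<sigma>^2 = 1"
    and v: "(\<Sum>i\<in>UNIV. (v $ i) *\<^sub>R (\<chi> k. jac (param \<sigma>) k i u)) = 0"
  shows "v = 0"
proof -
  note u' = param_domD[OF u]
  have Y: "u$2 \<noteq> 0" and r: "rad (u$0) \<noteq> 0"
    using u' by simp_all
  have comp: "(\<Sum>i\<in>UNIV. v $ i * param_jac \<sigma> k i u) = 0" for k
  proof -
    have "(\<Sum>i\<in>UNIV. (v $ i) *\<^sub>R (\<chi> k. jac (param \<sigma>) k i u)) $ k = 0"
      using v by simp
    then show ?thesis
      by (simp add: sum_UNIV_3 jac_param[OF u])
  qed
  have v0: "v$0 = 0"
    using comp[of 3] by (simp add: sum_UNIV_3 param_jac_def)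
  have E0: "v$1 * (rad (u$0) / u$2) - v$2 * (rad (u$0) * u$1 / (u$2)^2) = 0"
    using comp[of 0] v0 by (simp add: sum_UNIV_3 param_jac_def Let_def)
  have E1: "v$1 * (rad (u$0) * u$1 / u$2)
      + v$2 * (rad (u$0) * ((u$2)^2 - (u$1)^2 + 1) / (2 * (u$2)^2)) = 0"
    using comp[of 1] v0 by (simp add: sum_UNIV_3 param_jac_def Let_def)
  have E2: "v$1 * (\<sigma> * rad (u$0) * u$1 / u$2)
      + v$2 * (\<sigma> * rad (u$0) * ((u$2)^2 - (u$1)^2 - 1) / (2 * (u$2)^2)) = 0"
    using comp[of 2] v0 by (simp add: sum_UNIV_3 param_jac_def Let_def)
  have "\<sigma> * (v$1 * (\<sigma> * rad (u$0) * u$1 / u$2)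
        + v$2 * (\<sigma> * rad (u$0) * ((u$2)^2 - (u$1)^2 - 1) / (2 * (u$2)^2)))
      - (v$1 * (rad (u$0) * u$1 / u$2)
        + v$2 * (rad (u$0) * ((u$2)^2 - (u$1)^2 + 1) / (2 * (u$2)^2)))
      = - (v$2 * rad (u$0) / (u$2)^2)"
    using Y by (simp add: field_simps) (use \<sigma> in algebra)
  then have "v$2 = 0"
    using E1 E2 Y r by simp
  moreover have "v$1 = 0"
    using E0 Y r \<open>v$2 = 0\<close> by simp
  ultimately show ?thesis
    using v0 by (simp add: vec3_eq_iff)
qed

lemma elementary_on_rad: "(\<lambda>u. rad (u$0)) \<in> elementary_on param_dom"
proof -
  have "(\<lambda>u. inverse (u$0) - (u$0)^2) \<in> elementary_on param_dom"
    by (intro elementary_on_diff elementary_on_inverse elementary_on_power2 elementary_on_coord)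
       (auto simp: param_dom_def)
  then have "(\<lambda>u. sqrt (inverse (u$0) - (u$0)^2)) \<in> elementary_on param_dom"
    by (rule elementary_on_sqrt) (use rad_radicand_pos in \<open>auto simp: param_dom_def divide_inverse\<close>)
  then show ?thesis
    by (simp add: rad_def divide_inverse)
qed

lemma elementary_on_param: "(\<lambda>u. param \<sigma> u $ k) \<in> elementary_on param_dom"
proof -
  have Y: "\<forall>u\<in>param_dom. 2 * u$2 \<noteq> 0" "\<forall>u\<in>param_dom. u$2 \<noteq> 0"
    by (auto simp: param_dom_def)
  show ?thesis
    by (cases k rule: num4_cases)
       (auto intro!: elementary_on_mult elementary_on_divide elementary_on_add elementary_on_diff
          elementary_on_minus elementary_on_power2 elementary_on_rad elementary_on_coord
          elementary_on_const Y)
qed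

lemma local_param_param:
  assumes "\<sigma>^2 = 1"
  shows "local_param M5 param_dom (param \<sigma>)"
  unfolding local_param_def
proof (intro conjI allI ballI impI)
  show "smooth_on param_dom (\<lambda>u. param \<sigma> u $ k)" for k
    by (rule elementary_on_smooth_on[OF open_param_dom elementary_on_param])
  show "\<exists>W. open W \<and> param \<sigma> ` param_dom = W \<inter> M5"
    using open_sheet param_image[OF assms] by blast
qed (use open_param_dom param_image[OF assms] param_inj[OF assms] param_immersion[OF _ assms]
     in auto)

section \<open>The induced metric and its curvature\<close>

lemma matrix_inv_eqI:
  fixes A B :: "'a::comm_ring_1^'n^'n"
  assumes "A ** B = mat 1" "B ** A = mat 1"
  shows "matrix_inv A = B"
  unfolding matrix_inv_def
proof (rule some_equality)
  fix B'
  assume B': "A ** B' = mat 1 \<and> B' ** A = mat 1"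
  have "B' = B' ** (A ** B)"
    by (simp add: assms(1))
  also have "\<dots> = (B' ** A) ** B"
    by (simp add: matrix_mul_assoc)
  also have "\<dots> = B"
    using B' by simp
  finally show "B' = B" .
qed (use assms in auto)

lemma matrix_inv_diag:
  fixes a :: "'n::finite \<Rightarrow> real"
  assumes "\<And>i. a i \<noteq> 0"
  shows "matrix_inv (\<chi> i j. if i = j then a i else 0) = (\<chi> i j. if i = j then 1 / a i else 0)"
proof (rule matrix_inv_eqI)
  have diag_mult: "(\<chi> i j. if i = j then x i else 0) ** (\<chi> i j. if i = j then y i else 0)
      = (\<chi> i j. if i = j then x i * y i else (0::real))" for x y :: "'n \<Rightarrow> real"
  proof -
    have "(\<Sum>k\<in>UNIV. (if i = k then x i else 0) * (if k = j then y k else 0))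
        = (\<Sum>k\<in>UNIV. if k = i then (if i = j then x i * y i else 0) else 0)" for i j
      by (intro sum.cong) auto
    then show ?thesis
      by (simp add: matrix_matrix_mult_def vec_eq_iff)
  qed
  show "(\<chi> i j. if i = j then a i else 0) ** (\<chi> i j. if i = j then 1 / a i else 0) = mat 1"
    "(\<chi> i j. if i = j then 1 / a i else 0) ** (\<chi> i j. if i = j then a i else 0) = mat 1"
    unfolding diag_mult using assms by (simp_all add: mat_def vec_eq_iff)
qed

definition coef_A :: "real \<Rightarrow> real" where
  "coef_A c = (1 - 4 * c^3) / (4 * c^2 * (1 - c^3))"

definition coef_B :: "real \<Rightarrow> real" where
  "coef_B c = (1 - c^3) / 3"

definition dcoef_A :: "real \<Rightarrow> real" where
  "dcoef_A c = (c^3 - 2 - 8 * c^6) / (4 * c^3 * (1 - c^3)^2)"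

lemma coef_A_pos: "0 < c \<Longrightarrow> 4 * c^3 < 1 \<Longrightarrow> coef_A c > 0"
  unfolding coef_A_def by (intro divide_pos_pos mult_pos_pos) auto

lemma coef_B_pos: "4 * c^3 < 1 \<Longrightarrow> coef_B c > 0"
  unfolding coef_B_def by simp

lemma dcoef_A_neg:
  assumes "0 < c" "4 * c^3 < 1"
  shows "dcoef_A c < 0"
proof -
  have "c^3 - 2 - 8 * c^6 < 0"
    using assms(2) zero_less_power[OF assms(1), of 6] by linarith
  moreover have "4 * c^3 * (1 - c^3)^2 > 0"
    using assms by simp
  ultimately show ?thesis
    by (simp add: dcoef_A_def divide_neg_pos)
qed

lemma has_real_derivative_coef_A:
  assumes "0 < c" "4 * c^3 < 1"
  shows "(coef_A has_real_derivative dcoef_A c) (at c)"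
proof -
  have nz: "4 * c^2 * (1 - c^3) \<noteq> 0" "c \<noteq> 0"
    using assms by auto
  have num: "((\<lambda>c. 1 - 4 * c^3) has_real_derivative - 12 * c^2) (at c)"
    by (auto intro!: derivative_eq_intros)
  have den: "((\<lambda>c. 4 * c^2 * (1 - c^3)) has_real_derivative 8 * c - 20 * c^4) (at c)"
    by (auto intro!: derivative_eq_intros simp: algebra_simps eval_nat_numeral)
  have "(- 12 * c^2 * (4 * c^2 * (1 - c^3)) - (1 - 4 * c^3) * (8 * c - 20 * c^4))
      / (4 * c^2 * (1 - c^3) * (4 * c^2 * (1 - c^3)))
      = (4 * c * (c^3 - 2 - 8 * c^6)) / (4 * c * (4 * c^3 * (1 - c^3)^2))"
    by (rule arg_cong2[where f = "(/)"]; algebra)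
  also have "\<dots> = dcoef_A c"
    unfolding dcoef_A_def by (rule mult_divide_mult_cancel_left) (use nz in simp)
  finally show ?thesis
    using DERIV_divide[OF num den nz(1)] unfolding coef_A_def[abs_def] by simp
qed

definition param_metric :: "3 \<Rightarrow> 3 \<Rightarrow> real^3 \<Rightarrow> real" where
  "param_metric i j u =
     (if i \<noteq> j then 0 else if i = 0 then coef_A (u$0) else coef_B (u$0) / (u$2)^2)"

lemma gmet_param:
  assumes u: "u \<in> param_dom" and \<sigma>: "\<sigma>^2 = 1"
  shows "gmet 3 f5 (param \<sigma>) i j u = param_metric i j u"
proof -
  note u' = param_domD[OF u]
  have drad: "2 * (u$0)^2 * rad (u$0) * drad (u$0) = - (1 + 2 * (u$0)^3)"
    by (rule drad_eq[OF u'(1,2)])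
  have nz: "4 * (u$0)^2 * (1 - (u$0)^3) \<noteq> 0" "u$2 \<noteq> 0"
    using u'(1-3) by auto
  have three: "(3::3) = 0" by simp
  have "\<forall>i j. - (1/6) *
      (\<Sum>k\<in>UNIV. \<Sum>l\<in>UNIV. d2f5 k l (param \<sigma> u) * param_jac \<sigma> k i u * param_jac \<sigma> l j u)
      = param_metric i j u"
    unfolding forall_3 three
    by (intro conjI;
        simp add: sum_UNIV_4 d2f5_def param_jac_def Let_def param_metric_def coef_A_def coef_B_def;
        (simp add: eq_divide_eq nz)?; (simp add: nz field_simps)?; use drad u'(5) \<sigma> in algebra)
  then show ?thesis
    unfolding gmet_def hessian_f5 jac_param[OF u] by simp
qed

lemma ginv_param:
  assumes u: "u \<in> param_dom" and \<sigma>: "\<sigma>^2 = 1"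
  shows "ginv 3 f5 (param \<sigma>) u = (\<chi> i j. if i = j then 1 / param_metric i i u else 0)"
proof -
  note u' = param_domD[OF u]
  have diag: "(\<chi> i j. gmet 3 f5 (param \<sigma>) i j u) = (\<chi> i j. if i = j then param_metric i i u else 0)"
    by (simp add: vec_eq_iff gmet_param[OF u \<sigma>] param_metric_def)
  have "param_metric i i u \<noteq> 0" for i
    using coef_A_pos[OF u'(1,2)] coef_B_pos[OF u'(2)] u'(3) by (simp add: param_metric_def)
  then show ?thesis
    unfolding ginv_def diag by (rule matrix_inv_diag)
qed

definition param_metric_deriv :: "3 \<Rightarrow> 3 \<Rightarrow> 3 \<Rightarrow> real^3 \<Rightarrow> real" where
  "param_metric_deriv i j k u =
     (if i \<noteq> j then 0
      else if i = 0 then (if k = 0 then dcoef_A (u$0) else 0)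
      else if k = 0 then - ((u$0)^2 / (u$2)^2)
      else if k = 2 then - 2 * coef_B (u$0) / (u$2)^3
      else 0)"

lemma partial_param_metric:
  assumes "u \<in> param_dom"
  shows "partial (param_metric i j) k u = param_metric_deriv i j k u"
proof -
  note u = param_domD[OF assms]
  have coef_A': "(coef_A has_real_derivative dcoef_A (u$0)) (at (u$0))"
    by (rule has_real_derivative_coef_A[OF u(1,2)])
  show ?thesis
    by (cases i rule: num3_cases; cases j rule: num3_cases; cases k rule: num3_cases;
        (rule partial_eqI);
        use u(3) in \<open>auto simp: param_metric_def param_metric_deriv_def coef_B_def
          intro!: derivative_eq_intros coef_A'\<close>;
        simp add: field_simps eval_nat_numeral)
qed

lemma partial_gmet_param:
  assumes u: "u \<in> param_dom" and \<sigma>: "\<sigma>^2 = 1"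
  shows "partial (gmet 3 f5 (param \<sigma>) i j) k u = param_metric_deriv i j k u"
proof -
  have "partial (gmet 3 f5 (param \<sigma>) i j) k u = partial (param_metric i j) k u"
    by (rule partial_cong_open[OF open_param_dom u]) (rule gmet_param[OF _ \<sigma>])
  then show ?thesis
    using partial_param_metric[OF u] by simp
qed

definition param_christoffel :: "3 \<Rightarrow> 3 \<Rightarrow> 3 \<Rightarrow> real^3 \<Rightarrow> real" where
  "param_christoffel k i j u =
     (param_metric_deriv j k i u + param_metric_deriv i k j u - param_metric_deriv i j k u)
     / (2 * param_metric k k u)"

lemma christoffel_param:
  assumes u: "u \<in> param_dom" and \<sigma>: "\<sigma>^2 = 1"
  shows "christoffel 3 f5 (param \<sigma>) k i j u = param_christoffel k i j u"
  unfolding christoffel_def ginv_param[OF u \<sigma>] partial_gmet_param[OF u \<sigma>] param_christoffel_def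
  by (cases k rule: num3_cases) (simp_all add: sum_UNIV_3)

lemma riemann_param_0011:
  assumes u: "u \<in> param_dom" and \<sigma>: "\<sigma>^2 = 1"
  shows "riemann 3 f5 (param \<sigma>) 0 0 1 1 u =
    (u$0 / coef_A (u$0) - (u$0)^2 * dcoef_A (u$0) / (4 * (coef_A (u$0))^2)
      + (u$0)^4 / (4 * coef_A (u$0) * coef_B (u$0))) / (u$2)^2"
proof -
  note u' = param_domD[OF u]
  have A: "coef_A (u$0) \<noteq> 0" and B: "coef_B (u$0) \<noteq> 0"
    using coef_A_pos[OF u'(1,2)] coef_B_pos[OF u'(2)] by auto
  have coef_A': "(coef_A has_real_derivative dcoef_A (u$0)) (at (u$0))"
    by (rule has_real_derivative_coef_A[OF u'(1,2)])
  have christoffel_cong: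
    "partial (christoffel 3 f5 (param \<sigma>) k i j) l u = partial (param_christoffel k i j) l u" for k i j l
    by (rule partial_cong_open[OF open_param_dom u]) (rule christoffel_param[OF _ \<sigma>])
  have "param_christoffel 0 0 1 = (\<lambda>u. 0)"
    by (rule ext) (simp add: param_christoffel_def param_metric_deriv_def)
  then have d001: "partial (param_christoffel 0 0 1) 1 u = 0"
    by (simp add: partial_def)
  have d011: "partial (param_christoffel 0 1 1) 0 u =
      (u$0 / coef_A (u$0) - (u$0)^2 * dcoef_A (u$0) / (2 * (coef_A (u$0))^2)) / (u$2)^2"
    by (rule partial_eqI)
       (use A u'(3) in \<open>auto simp: param_christoffel_def param_metric_deriv_def param_metric_def
          intro!: derivative_eq_intros coef_A'\<close>;
        simp add: field_simps power2_eq_square)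
  have sum: "(\<Sum>p\<in>UNIV. param_christoffel 0 0 p u * param_christoffel p 1 1 u
        - param_christoffel 0 1 p u * param_christoffel p 0 1 u)
      = (dcoef_A (u$0) * (u$0)^2 / (4 * (coef_A (u$0))^2)
        + (u$0)^4 / (4 * coef_A (u$0) * coef_B (u$0))) / (u$2)^2"
    using A B u'(3)
    by (simp add: sum_UNIV_3 param_christoffel_def param_metric_deriv_def param_metric_def)
       (simp add: field_simps power2_eq_square eval_nat_numeral)
  show ?thesis
    unfolding riemann_def christoffel_cong christoffel_param[OF u \<sigma>] d001 d011 sum
    using u'(3) by (simp add: field_simps power2_eq_square)
qed

lemma sectional_curv_param:
  assumes u: "u \<in> param_dom" and \<sigma>: "\<sigma>^2 = 1"
  shows "sectional_curv 3 f5 (param \<sigma>) u (axis 0 1) (axis 1 1) =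
    riemann 3 f5 (param \<sigma>) 0 0 1 1 u * (u$2)^2 / coef_B (u$0)"
proof -
  note u' = param_domD[OF u]
  have "coef_A (u$0) \<noteq> 0"
    using coef_A_pos[OF u'(1,2)] by simp
  then show ?thesis
    unfolding sectional_curv_def ginner_def
    using u'(3) by (simp add: sum_UNIV_3 axis_def gmet_param[OF u \<sigma>] param_metric_def)
qed

lemma sectional_curv_param_pos:
  assumes u: "u \<in> param_dom" and \<sigma>: "\<sigma>^2 = 1"
  shows "sectional_curv 3 f5 (param \<sigma>) u (axis 0 1) (axis 1 1) > 0"
proof -
  note u' = param_domD[OF u]
  have A: "coef_A (u$0) > 0" and B: "coef_B (u$0) > 0" and dA: "dcoef_A (u$0) < 0"
    using coef_A_pos[OF u'(1,2)] coef_B_pos[OF u'(2)] dcoef_A_neg[OF u'(1,2)] by auto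
  have "0 < u$0 / coef_A (u$0) + (u$0)^2 * (- dcoef_A (u$0)) / (4 * (coef_A (u$0))^2)
      + (u$0)^4 / (4 * coef_A (u$0) * coef_B (u$0))"
    using A B dA u'(1) by (intro add_pos_pos divide_pos_pos mult_pos_pos) auto
  then have "riemann 3 f5 (param \<sigma>) 0 0 1 1 u > 0"
    unfolding riemann_param_0011[OF u \<sigma>] using u'(3) by simp
  then show ?thesis
    unfolding sectional_curv_param[OF u \<sigma>] using B u'(3) by simp
qed

lemma independent_axis_pair: "independent {axis 0 1, axis 1 1 :: real^3}"
  by (rule pairwise_orthogonal_independent)
     (auto simp: pairwise_def orthogonal_def inner_axis_axis axis_eq_0_iff axis_eq_axis)

theorem lemma5p1:
  shows "index_cone f5 \<noteq> {} \<and>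
    (\<forall>p\<in>M5. \<exists>(U :: (real^3) set) \<phi> u0 a b.
        local_param M5 U \<phi> \<and> u0 \<in> U \<and> \<phi> u0 = p \<and>
        independent {a, b} \<and> a \<noteq> b \<and> sectional_curv 3 f5 \<phi> u0 a b > 0)"
proof (intro conjI ballI)
  have "param 1 (vec3 (1/2) 0 1) \<in> M5"
    by (rule param_in_M5) (simp_all add: param_dom_def power3_eq_cube)
  then show "index_cone f5 \<noteq> {}"
    by (auto simp: M5_def)
next
  fix p
  assume p: "p \<in> M5"
  then obtain \<sigma> :: real where \<sigma>: "\<sigma>^2 = 1" and "p \<in> sheet \<sigma>"
    by (rule M5_sheet)
  with p obtain u where u: "u \<in> param_dom" "param \<sigma> u = p"
    using param_onto by metis
  have "axis 0 1 \<noteq> (axis 1 1 :: real^3)"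
    by (simp add: axis_eq_axis)
  then show "\<exists>(U :: (real^3) set) \<phi> u0 a b.
      local_param M5 U \<phi> \<and> u0 \<in> U \<and> \<phi> u0 = p \<and>
      independent {a, b} \<and> a \<noteq> b \<and> sectional_curv 3 f5 \<phi> u0 a b > 0"
    using local_param_param[OF \<sigma>] u independent_axis_pair sectional_curv_param_pos[OF u(1) \<sigma>]
    by blast
qed

end
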